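(* Let $\eta(n)\in\mathbb N^N$ denote random allocation after $n$ steps ($\eta_x(n)$ = number of the first $n$ i.i.d. uniform draws from $\{1,\dots,N\}$ equal to $x$). Let $T_N=\lfloor N/\log N\rfloor$ and $H_N=\log N/\log\log N$. For every $\alpha\in[\tfrac12,1)$ and every $\delta\in(0,(1-\alpha)/2)$, with probability at least $1-\varepsilon_N$ where $\sum_N\varepsilon_N<\infty$ (in the paper's words: almost surely, for $N$ large enough), $$\big|\{x\in\{1,\dots,N\}:\ \eta_x(T_N)>\delta H_N\}\big|\ge N^{\alpha}.$$ *)

theory Defs
  imports "HOL-Probability.Probability"
begin

text \<open>Random allocation: a sample path is a function \<omega> assigning to each step
  i < n the site \<omega> i in {1..N}; the i.i.d. uniform draws of the first n steps
  are modelled by the uniform distribution on all such functions.\<close>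

definition alloc_space :: "nat \<Rightarrow> nat \<Rightarrow> (nat \<Rightarrow> nat) set" where
  "alloc_space N n = PiE {..<n} (\<lambda>_. {1..N})"

definition alloc_pmf :: "nat \<Rightarrow> nat \<Rightarrow> (nat \<Rightarrow> nat) pmf" where
  "alloc_pmf N n = pmf_of_set (alloc_space N n)"

definition eta :: "(nat \<Rightarrow> nat) \<Rightarrow> nat \<Rightarrow> nat \<Rightarrow> nat" where
  "eta \<omega> n x = card {i. i < n \<and> \<omega> i = x}"

definition T_N :: "nat \<Rightarrow> nat" where
  "T_N N = nat \<lfloor>real N / ln (real N)\<rfloor>"

definition H_N :: "nat \<Rightarrow> real" where
  "H_N N = ln (real N) / ln (ln (real N))"

end

theory Submission
  imports Defs "HOL-Real_Asymp.Real_Asymp"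
begin

text \<open>Weight every allocation by \<open>(1/2)\<^sup>Y\<close>, where \<open>Y\<close> is the number of sites holding more
  than \<open>\<delta> H\<^sub>N\<close> particles, and argue as in Markov's inequality: the probability that
  \<open>Y < N\<^sup>\<alpha>\<close> is at most \<open>2\<^bsup>N\<^sup>\<alpha>\<^esup>\<close> times the mean weight. Summing the weight over all
  allocations is extracting a coefficient of the \<open>N\<close>-th power of a truncated exponential series,
  so it is bounded by the value of that power at the saddle point \<open>r = T\<^sub>N / N\<close>. The
  truncation removes at least \<open>r\<^sup>k / (2 k!)\<close> from \<open>e\<^sup>r\<close>; with \<open>k \<approx> \<delta> H\<^sub>N\<close> this saves a factor
  \<open>exp (- N\<^bsup>1 - 2\<delta> - o(1)\<^esup>)\<close>, which beats \<open>2\<^bsup>N\<^sup>\<alpha>\<^esup>\<close> because \<open>\<alpha> + 2\<delta> < 1\<close>. The failure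
  probability is therefore eventually below \<open>1/N\<^sup>2\<close>, which is summable.\<close>

definition occupancy_sum :: "(nat \<Rightarrow> real) \<Rightarrow> 'i set \<Rightarrow> 'b set \<Rightarrow> real" where
  "occupancy_sum f I B = (\<Sum>\<omega>\<in>I \<rightarrow>\<^sub>E B. \<Prod>x\<in>B. f (card {i\<in>I. \<omega> i = x}))"

lemma occupancy_sum_insert:
  assumes "finite I" "finite B" "b \<notin> B"
  shows "occupancy_sum f I (insert b B) = (\<Sum>S\<in>Pow I. f (card S) * occupancy_sum f (I - S) B)"
proof -
  let ?h = "\<lambda>\<omega>. \<Prod>x\<in>insert b B. f (card {i\<in>I. \<omega> i = x})"
  let ?fibre = "\<lambda>S. {\<omega> \<in> I \<rightarrow>\<^sub>E insert b B. {i\<in>I. \<omega> i = b} = S}"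
  have "occupancy_sum f I (insert b B) = (\<Sum>S\<in>Pow I. sum ?h (?fibre S))"
    unfolding occupancy_sum_def
    by (rule sum.group[symmetric]) (use assms in \<open>auto intro: finite_PiE\<close>)
  also have "\<dots> = (\<Sum>S\<in>Pow I. f (card S) * occupancy_sum f (I - S) B)"
  proof (rule sum.cong[OF refl])
    fix S assume S: "S \<in> Pow I"
    define ext where "ext = (\<lambda>\<omega>. \<lambda>i. if i \<in> S then b else \<omega> i)"
    have inj: "inj_on ext (I - S \<rightarrow>\<^sub>E B)"
    proof (rule inj_onI)
      fix u v assume u: "u \<in> I - S \<rightarrow>\<^sub>E B" and v: "v \<in> I - S \<rightarrow>\<^sub>E B" and e: "ext u = ext v"
      show "u = v"
      proof (rule PiE_ext[OF u v])
        fix i assume "i \<in> I - S"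
        then show "u i = v i" using fun_cong[OF e, of i] by (simp add: ext_def)
      qed
    qed
    have image: "ext ` (I - S \<rightarrow>\<^sub>E B) = ?fibre S"
    proof
      show "ext ` (I - S \<rightarrow>\<^sub>E B) \<subseteq> ?fibre S"
        using S assms(3) by (auto simp: ext_def PiE_def extensional_def Pi_def split: if_splits)
      show "?fibre S \<subseteq> ext ` (I - S \<rightarrow>\<^sub>E B)"
      proof
        fix \<omega> assume \<omega>: "\<omega> \<in> ?fibre S"
        then have "ext (restrict \<omega> (I - S)) = \<omega>"
          using S by (auto simp: ext_def PiE_def extensional_def)
        moreover have "restrict \<omega> (I - S) \<in> I - S \<rightarrow>\<^sub>E B"
          using \<omega> by (auto simp: PiE_def Pi_def)
        ultimately show "\<omega> \<in> ext ` (I - S \<rightarrow>\<^sub>E B)" by (metis image_eqI)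
      qed
    qed
    have "sum ?h (?fibre S) = (\<Sum>\<omega>\<in>I - S \<rightarrow>\<^sub>E B. ?h (ext \<omega>))"
      by (simp only: image[symmetric] sum.reindex[OF inj] comp_def)
    also have "\<dots> = (\<Sum>\<omega>\<in>I - S \<rightarrow>\<^sub>E B. f (card S) * (\<Prod>x\<in>B. f (card {i\<in>I - S. \<omega> i = x})))"
    proof (rule sum.cong[OF refl])
      fix \<omega> assume \<omega>: "\<omega> \<in> I - S \<rightarrow>\<^sub>E B"
      have "{i\<in>I. ext \<omega> i = b} = S"
        using \<omega> S assms(3) by (auto simp: ext_def PiE_def Pi_def)
      moreover have "{i\<in>I. ext \<omega> i = x} = {i\<in>I - S. \<omega> i = x}" if "x \<in> B" for x
        using that S assms(3) by (auto simp: ext_def)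
      ultimately show "?h (ext \<omega>) = f (card S) * (\<Prod>x\<in>B. f (card {i\<in>I - S. \<omega> i = x}))"
        using assms(2,3) by (simp cong: prod.cong)
    qed
    also have "\<dots> = f (card S) * occupancy_sum f (I - S) B"
      by (simp add: occupancy_sum_def sum_distrib_left)
    finally show "sum ?h (?fibre S) = f (card S) * occupancy_sum f (I - S) B" .
  qed
  finally show ?thesis .
qed

lemma sum_Pow_card_eq_sum_binomial:
  assumes "finite I"
  shows "(\<Sum>S\<in>Pow I. g (card S)) = (\<Sum>j\<le>card I. of_nat (card I choose j) * (g j :: real))"
proof -
  have "(\<Sum>S\<in>Pow I. g (card S)) = (\<Sum>j\<le>card I. \<Sum>S | S \<in> Pow I \<and> card S = j. g (card S))"
    by (rule sum.group[symmetric]) (use assms in \<open>auto intro: card_mono\<close>)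
  also have "\<dots> = (\<Sum>j\<le>card I. of_nat (card I choose j) * g j)"
  proof (rule sum.cong[OF refl])
    fix j
    have "(\<Sum>S | S \<in> Pow I \<and> card S = j. g (card S)) = (\<Sum>S | S \<subseteq> I \<and> card S = j. g j)"
      by (rule sum.cong) auto
    then show "(\<Sum>S | S \<in> Pow I \<and> card S = j. g (card S)) = of_nat (card I choose j) * g j"
      using n_subsets[OF assms, of j] by simp
  qed
  finally show ?thesis .
qed

text \<open>\<open>occupancy_sum f I B\<close> is \<open>(card I)!\<close> times the coefficient of \<open>z\<^bsup>card I\<^esup>\<close> in
  \<open>(\<Sum>\<^sub>j f j z\<^sup>j / j!)\<^bsup>card B\<^esup>\<close>; since all coefficients are nonnegative, that coefficient is at
  most the value at \<open>z = r\<close> divided by \<open>r\<^bsup>card I\<^esup>\<close>.\<close>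

lemma occupancy_sum_le:
  assumes "finite I" "card I \<le> M" "finite B" "0 < r" "\<And>j. 0 \<le> f j"
  shows "occupancy_sum f I B \<le> fact (card I) / r ^ card I * (\<Sum>j\<le>M. f j * r ^ j / fact j) ^ card B"
  using assms(3,1,2)
proof (induction B arbitrary: I rule: finite_induct)
  case empty
  then show ?case
    using \<open>0 < r\<close> by (cases "I = {}") (simp_all add: occupancy_sum_def card_PiE card_gt_0_iff power_0_left)
next
  case (insert b B)
  define G where "G = (\<Sum>j\<le>M. f j * r ^ j / fact j)"
  let ?n = "card I"
  have G_nonneg: "0 \<le> G"
    unfolding G_def using assms(4,5) by (intro sum_nonneg) auto
  have "occupancy_sum f I (insert b B) = (\<Sum>S\<in>Pow I. f (card S) * occupancy_sum f (I - S) B)"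
    using insert by (intro occupancy_sum_insert) auto
  also have "\<dots> \<le> (\<Sum>S\<in>Pow I. f (card S) * (fact (?n - card S) / r ^ (?n - card S) * G ^ card B))"
  proof (rule sum_mono)
    fix S assume S: "S \<in> Pow I"
    then have card_diff: "card (I - S) = ?n - card S"
      using insert.prems(1) by (simp add: card_Diff_subset finite_subset)
    have "occupancy_sum f (I - S) B \<le> fact (card (I - S)) / r ^ card (I - S) * G ^ card B"
      unfolding G_def using insert.prems by (intro insert.IH) (auto intro: order_trans[OF card_mono])
    then show "f (card S) * occupancy_sum f (I - S) B
        \<le> f (card S) * (fact (?n - card S) / r ^ (?n - card S) * G ^ card B)"
      using assms(5) unfolding card_diff by (intro mult_left_mono) auto
  qed
  also have "\<dots> = (\<Sum>j\<le>?n. of_nat (?n choose j) * (f j * (fact (?n - j) / r ^ (?n - j) * G ^ card B)))"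
    by (rule sum_Pow_card_eq_sum_binomial[OF insert.prems(1)])
  also have "\<dots> = fact ?n / r ^ ?n * (\<Sum>j\<le>?n. f j * r ^ j / fact j) * G ^ card B"
    unfolding sum_distrib_left sum_distrib_right
  proof (rule sum.cong[OF refl])
    fix j assume "j \<in> {..?n}"
    then have "r ^ ?n = r ^ j * r ^ (?n - j)"
      by (simp add: power_add[symmetric])
    with \<open>j \<in> {..?n}\<close> show "of_nat (?n choose j) * (f j * (fact (?n - j) / r ^ (?n - j) * G ^ card B))
        = fact ?n / r ^ ?n * (f j * r ^ j / fact j) * G ^ card B"
      using assms(4) by (simp add: binomial_fact field_simps)
  qed
  also have "\<dots> \<le> fact ?n / r ^ ?n * G * G ^ card B"
  proof -
    have "(\<Sum>j\<le>?n. f j * r ^ j / fact j) \<le> G"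
      unfolding G_def using insert.prems(2) assms(4,5) by (intro sum_mono2) auto
    then show ?thesis
      using G_nonneg assms(4) by (intro mult_right_mono mult_left_mono) auto
  qed
  finally show ?case
    using insert by (simp add: G_def)
qed

lemma sum_power_div_fact_le_exp:
  assumes "0 \<le> (r::real)"
  shows "(\<Sum>j\<le>n. r ^ j / fact j) \<le> exp r"
  using summable_exp_generic[of r] assms
  by (auto simp: exp_def divide_inverse ac_simps intro!: sum_le_suminf)

lemma truncated_exp_sum_le:
  fixes r :: real
  assumes "0 < r" "k \<le> M"
  shows "(\<Sum>j\<le>M. (if k \<le> j then 1/2 else 1) * r ^ j / fact j) \<le> exp r - r ^ k / (2 * fact k)"
proof -
  have "(\<Sum>j\<le>M. (if k \<le> j then 1/2 else 1) * r ^ j / fact j) + r ^ k / (2 * fact k)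
      \<le> (\<Sum>j\<in>{..M} - {k}. r ^ j / fact j) + r ^ k / fact k"
  proof -
    have "(\<Sum>j\<le>M. (if k \<le> j then 1/2 else 1) * r ^ j / fact j)
        = (\<Sum>j\<in>{..M} - {k}. (if k \<le> j then 1/2 else 1) * r ^ j / fact j) + r ^ k / (2 * fact k)"
      using assms(2) by (subst sum.remove[of _ k]) auto
    moreover have "(\<Sum>j\<in>{..M} - {k}. (if k \<le> j then 1/2 else 1) * r ^ j / fact j)
        \<le> (\<Sum>j\<in>{..M} - {k}. r ^ j / fact j)"
      using assms(1) by (intro sum_mono) (auto simp: divide_right_mono)
    ultimately show ?thesis by simp
  qed
  also have "\<dots> = (\<Sum>j\<le>M. r ^ j / fact j)"
    using assms(2) by (subst (2) sum.remove[of _ k]) auto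
  also have "\<dots> \<le> exp r"
    using assms(1) by (intro sum_power_div_fact_le_exp) simp
  finally show ?thesis by simp
qed

lemma exp_one_le_Suc_div_power:
  assumes "0 < n"
  shows "exp 1 \<le> ((real n + 1) / real n) ^ Suc n"
proof -
  have n: "0 < real n" using assms by simp
  have "ln (real n / (real n + 1)) \<le> real n / (real n + 1) - 1"
    using n by (intro ln_le_minus_one) simp
  also have "\<dots> = - 1 / (real n + 1)"
    using n by (simp add: field_simps)
  finally have "1 \<le> real (Suc n) * ln ((real n + 1) / real n)"
    using n by (simp add: ln_div field_simps)
  then have "exp 1 \<le> exp (real (Suc n) * ln ((real n + 1) / real n))"
    by simp
  also have "\<dots> = exp (ln ((real n + 1) / real n)) ^ Suc n"
    by (rule exp_of_nat_mult)
  also have "\<dots> = ((real n + 1) / real n) ^ Suc n"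
    using n by simp
  finally show ?thesis .
qed

lemma fact_mul_exp_le:
  assumes "1 \<le> n"
  shows "fact n * exp (real n) \<le> exp 1 * real n * real n ^ n"
  using assms
proof (induction n rule: dec_induct)
  case base
  then show ?case by simp
next
  case (step n)
  have n: "0 < real n" using step.hyps by simp
  have "fact (Suc n) * exp (real (Suc n)) = (real n + 1) * exp 1 * (fact n * exp (real n))"
    by (simp add: exp_add field_simps)
  also have "\<dots> \<le> (real n + 1) * exp 1 * (exp 1 * real n * real n ^ n)"
    using step.IH by (intro mult_left_mono) auto
  also have "\<dots> = exp 1 * (real n + 1) * (exp 1 * real n ^ Suc n)"
    by (simp add: field_simps)
  also have "\<dots> \<le> exp 1 * (real n + 1) * (real n + 1) ^ Suc n"
    using exp_one_le_Suc_div_power[of n] step.hyps n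
    by (intro mult_left_mono) (simp_all add: power_divide field_simps)
  finally show ?case
    by (simp add: add.commute)
qed

lemma prob_few_heavy_bins_le:
  fixes m r :: real
  assumes "1 \<le> N" "0 < r" "k \<le> T"
  shows "measure_pmf.prob (alloc_pmf N T) {\<omega>. real (card {x\<in>{1..N}. k \<le> eta \<omega> T x}) < m}
    \<le> 2 powr m * (fact T / (r * real N) ^ T) * (exp r - r ^ k / (2 * fact k)) ^ N"
proof -
  define S where "S = alloc_space N T"
  define Y where "Y \<omega> = card {x\<in>{1..N}. k \<le> eta \<omega> T x}" for \<omega>
  define f where "f j = (if k \<le> j then 1/2 else 1 :: real)" for j
  define G where "G = (\<Sum>j\<le>T. f j * r ^ j / fact j)"
  have S: "finite S" "card S = N ^ T"
    by (simp_all add: S_def alloc_space_def finite_PiE card_PiE)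
  have weight: "(\<Prod>x\<in>{1..N}. f (eta \<omega> T x)) = (1/2) ^ Y \<omega>" for \<omega>
  proof -
    have "(\<Prod>x\<in>{1..N}. f (eta \<omega> T x))
        = (\<Prod>x\<in>{1..N} \<inter> {x. k \<le> eta \<omega> T x}. 1/2) * (\<Prod>x\<in>{1..N} \<inter> - {x. k \<le> eta \<omega> T x}. 1)"
      unfolding f_def by (rule prod.If_cases) simp
    then show ?thesis
      by (simp add: Y_def Int_def)
  qed
  have "real (card {\<omega>\<in>S. Y \<omega> < m}) = (\<Sum>\<omega>\<in>{\<omega>\<in>S. Y \<omega> < m}. 1)"
    by simp
  also have "\<dots> \<le> (\<Sum>\<omega>\<in>{\<omega>\<in>S. Y \<omega> < m}. 2 powr m * (1/2) ^ Y \<omega>)"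
  proof (rule sum_mono)
    fix \<omega> assume "\<omega> \<in> {\<omega>\<in>S. Y \<omega> < m}"
    then have "1 \<le> 2 powr (m - Y \<omega>)"
      by (intro ge_one_powr_ge_zero) auto
    also have "2 powr (m - Y \<omega>) = 2 powr m * (1/2) ^ Y \<omega>"
      by (simp add: powr_diff powr_realpow power_divide)
    finally show "1 \<le> 2 powr m * (1/2) ^ Y \<omega>" .
  qed
  also have "\<dots> \<le> (\<Sum>\<omega>\<in>S. 2 powr m * (1/2) ^ Y \<omega>)"
    using S by (intro sum_mono2) auto
  also have "\<dots> = 2 powr m * occupancy_sum f {..<T} {1..N}"
  proof -
    have "occupancy_sum f {..<T} {1..N} = (\<Sum>\<omega>\<in>S. \<Prod>x\<in>{1..N}. f (eta \<omega> T x))"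
      by (simp add: occupancy_sum_def S_def alloc_space_def eta_def)
    then show ?thesis
      by (simp only: weight sum_distrib_left)
  qed
  also have "\<dots> \<le> 2 powr m * (fact T / r ^ T * G ^ N)"
    using occupancy_sum_le[of "{..<T}" T "{1..N}" r f] assms(2)
    by (intro mult_left_mono) (simp_all add: f_def G_def)
  also have "\<dots> \<le> 2 powr m * (fact T / r ^ T * (exp r - r ^ k / (2 * fact k)) ^ N)"
  proof -
    have "0 \<le> G"
      unfolding G_def f_def using assms(2) by (intro sum_nonneg) auto
    moreover have "G \<le> exp r - r ^ k / (2 * fact k)"
      unfolding G_def f_def using truncated_exp_sum_le[OF assms(2,3)] by simp
    ultimately show ?thesis
      using assms(2) by (intro mult_left_mono power_mono) auto
  qed
  finally have card_bad: "real (card {\<omega>\<in>S. Y \<omega> < m})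
      \<le> 2 powr m * (fact T / r ^ T * (exp r - r ^ k / (2 * fact k)) ^ N)" .
  have "S \<noteq> {}"
    using S assms(1) by auto
  then have "measure_pmf.prob (alloc_pmf N T) {\<omega>. Y \<omega> < m} = real (card {\<omega>\<in>S. Y \<omega> < m}) / real N ^ T"
    using S by (simp add: alloc_pmf_def S_def[symmetric] measure_pmf_of_set Int_def)
  also have "\<dots> \<le> 2 powr m * (fact T / r ^ T * (exp r - r ^ k / (2 * fact k)) ^ N) / real N ^ T"
    using card_bad by (intro divide_right_mono) auto
  also have "\<dots> = 2 powr m * (fact T / (r * real N) ^ T) * (exp r - r ^ k / (2 * fact k)) ^ N"
    by (simp add: power_mult_distrib)
  finally show ?thesis
    by (simp add: Y_def)
qed

lemma prob_few_heavy_bins_le_exp: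
  fixes m :: real
  assumes "1 \<le> N" "1 \<le> T" "k \<le> T"
  shows "measure_pmf.prob (alloc_pmf N T) {\<omega>. real (card {x\<in>{1..N}. k \<le> eta \<omega> T x}) < m}
    \<le> 2 powr m * exp 1 * real T * exp (- real N * (real T / real N) ^ k / (2 * fact k * exp (real T / real N)))"
proof -
  define r where "r = real T / real N"
  define q where "q = r ^ k / (2 * fact k)"
  define E where "E = exp (- real N * q / exp r)"
  have r: "0 < r" "r * real N = real T"
    using assms(1,2) by (simp_all add: r_def)
  have "exp r - q \<le> exp r * exp (- q / exp r)"
  proof -
    have "exp r - q = exp r * (1 + - q / exp r)"
      by (simp add: field_simps)
    also have "\<dots> \<le> exp r * exp (- q / exp r)"
      by (intro mult_left_mono exp_ge_add_one_self) auto
    finally show ?thesis .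
  qed
  moreover have "0 \<le> (\<Sum>j\<le>k. (if k \<le> j then 1/2 else 1) * r ^ j / fact j)"
    using r(1) by (intro sum_nonneg) auto
  then have "0 \<le> exp r - q"
    using truncated_exp_sum_le[OF r(1) order_refl, of k] unfolding q_def by linarith
  ultimately have "(exp r - q) ^ N \<le> (exp r * exp (- q / exp r)) ^ N"
    by (rule power_mono)
  also have "\<dots> = exp (real N * (r + - q / exp r))"
    by (simp only: exp_add[symmetric] exp_of_nat_mult)
  also have "\<dots> = exp (real T) * E"
    by (simp add: E_def exp_add[symmetric] r(2)[symmetric] algebra_simps)
  finally have power_le: "(exp r - q) ^ N \<le> exp (real T) * E" .
  have fact_exp: "fact T * exp (real T) / real T ^ T \<le> exp 1 * real T"
    using fact_mul_exp_le[OF assms(2)] assms(2) by (simp add: divide_le_eq)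
  have "fact T / real T ^ T * (exp r - q) ^ N \<le> fact T / real T ^ T * (exp (real T) * E)"
    by (intro mult_left_mono power_le) auto
  also have "\<dots> = fact T * exp (real T) / real T ^ T * E"
    by simp
  also have "\<dots> \<le> exp 1 * real T * E"
    using fact_exp by (intro mult_right_mono) (auto simp: E_def)
  finally have "fact T / real T ^ T * (exp r - q) ^ N \<le> exp 1 * real T * E" .
  then have "2 powr m * (fact T / (r * real N) ^ T) * (exp r - q) ^ N \<le> 2 powr m * exp 1 * real T * E"
    unfolding r(2) mult.assoc by (rule mult_left_mono) simp_all
  with prob_few_heavy_bins_le[OF assms(1) r(1) assms(3), of m] show ?thesis
    unfolding E_def q_def r_def by (simp add: mult.assoc)
qed

lemma truncation_gain_ge:
  fixes x r K :: real and k :: nat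
  assumes "0 < x" "1 \<le> ln x" "1 \<le> K" "real k \<le> K" "1 / (2 * ln x) \<le> r" "r \<le> 1"
  shows "x / (2 * exp 1) * (2 * K * ln x) powr (- K) \<le> x * r ^ k / (2 * fact k * exp r)"
proof -
  have "0 < 1 / (2 * ln x)"
    using assms(2) by simp
  then have r: "0 < r"
    using assms(5) by linarith
  have base: "1 \<le> 2 * K * ln x"
    using assms(2,3) by (simp add: one_le_mult_iff mult_ge1_I)
  have "fact k \<le> real k ^ k"
    using fact_le_power[of k] by simp
  also have "\<dots> \<le> K ^ k"
    using assms(4) by (intro power_mono) auto
  finally have "fact k \<le> K ^ k" .
  moreover have "(1 / (2 * ln x)) ^ k \<le> r ^ k"
    using assms(2,5) by (intro power_mono) auto
  ultimately have "(1 / (2 * ln x)) ^ k / K ^ k \<le> r ^ k / fact k"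
    using assms(2,3) r by (intro frac_le) auto
  moreover have "(2 * K * ln x) powr (- K) \<le> (1 / (2 * ln x)) ^ k / K ^ k"
  proof -
    have "(2 * K * ln x) powr (- K) \<le> (2 * K * ln x) powr (- real k)"
      using base assms(4) by (intro powr_mono) auto
    also have "\<dots> = (1 / (2 * ln x)) ^ k / K ^ k"
      using base by (simp add: powr_minus powr_realpow power_mult_distrib power_divide field_simps)
    finally show ?thesis .
  qed
  ultimately have "(2 * K * ln x) powr (- K) / exp 1 \<le> r ^ k / fact k / exp r"
    using assms(6) r by (intro frac_le) auto
  then have "x * ((2 * K * ln x) powr (- K) / exp 1) / 2 \<le> x * (r ^ k / fact k / exp r) / 2"
    using assms(1) by (intro divide_right_mono mult_left_mono) auto
  then show ?thesis
    by (simp add: field_simps)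
qed

lemma T_N_bounds:
  assumes "1 \<le> N"
  shows "real N / ln (real N) - 1 < real (T_N N)" "real (T_N N) \<le> real N / ln (real N)"
proof -
  have "real (T_N N) = of_int \<lfloor>real N / ln (real N)\<rfloor>"
    using assms by (simp add: T_N_def)
  then show "real N / ln (real N) - 1 < real (T_N N)" "real (T_N N) \<le> real N / ln (real N)"
    by linarith+
qed

lemma less_real_iff_Suc_nat_floor_le:
  assumes "0 \<le> h"
  shows "h < real j \<longleftrightarrow> nat \<lfloor>h\<rfloor> + 1 \<le> j"
  using assms floor_less_iff[of h "int j"] by linarith

lemma prob_le_eq_one_minus_prob_less:
  fixes f :: "'a \<Rightarrow> 'b::linorder"
  shows "measure_pmf.prob p {\<omega>. m \<le> f \<omega>} = 1 - measure_pmf.prob p {\<omega>. f \<omega> < m}"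
proof -
  have "{\<omega>. m \<le> f \<omega>} = space (measure_pmf p) - {\<omega>. f \<omega> < m}"
    by auto
  then show ?thesis
    by (simp only: measure_pmf.prob_compl sets_measure_pmf UNIV_I)
qed

lemma two_powr_mult_exp_le_inverse_square:
  fixes m t x E :: real
  assumes "0 < x" "0 \<le> t" "t \<le> x" "m * ln 2 + 1 + 3 * ln x \<le> E"
  shows "2 powr m * exp 1 * t * exp (- E) \<le> 1 / x ^ 2"
proof -
  have "2 powr m * exp 1 * t * exp (- E) \<le> 2 powr m * exp 1 * x * exp (- E)"
    using assms(3) by (intro mult_right_mono mult_left_mono) auto
  also have "\<dots> = exp (m * ln 2) * exp 1 * exp (ln x) * exp (- E)"
    using assms(1) by (simp add: powr_def)
  also have "\<dots> = exp (m * ln 2 + 1 + ln x - E)"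
    by (simp only: diff_conv_add_uminus exp_add)
  also have "\<dots> \<le> exp (- 2 * ln x)"
    using assms(4) by simp
  also have "\<dots> = 1 / (exp (ln x) * exp (ln x))"
    by (simp add: exp_minus exp_add[symmetric] inverse_eq_divide)
  also have "\<dots> = 1 / x ^ 2"
    using assms(1) by (simp add: power2_eq_square)
  finally show ?thesis .
qed

lemma prob_many_heavy_bins_ge:
  fixes N :: nat and \<alpha> \<delta> :: real
  defines "K \<equiv> \<delta> * H_N N + 1"
  assumes "0 < \<delta>" "0 < ln (ln (real N))" "1 \<le> ln (real N)"
    and "K \<le> real N / ln (real N) - 1"
    and "1 / (2 * ln (real N)) \<le> 1 / ln (real N) - 1 / real N"
    and "real N powr \<alpha> * ln 2 + 1 + 3 * ln (real N)
      \<le> real N / (2 * exp 1) * (2 * K * ln (real N)) powr (- K)"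
  shows "1 - 1 / real N ^ 2 \<le> measure_pmf.prob (alloc_pmf N (T_N N))
    {\<omega>. real N powr \<alpha> \<le> real (card {x\<in>{1..N}. \<delta> * H_N N < real (eta \<omega> (T_N N) x)})}"
proof -
  define x where "x = real N"
  define T where "T = T_N N"
  define k where "k = nat \<lfloor>\<delta> * H_N N\<rfloor> + 1"
  define r where "r = real T / x"
  define m where "m = x powr \<alpha>"
  have N: "1 \<le> N"
    using assms(4) by (cases N) auto
  have x: "0 < x" "1 \<le> ln x"
    using N assms(4) by (simp_all add: x_def)
  have H: "0 \<le> \<delta> * H_N N"
    using assms(2,3) x(2) by (simp add: H_N_def x_def)
  have k: "real k \<le> K" "1 \<le> real k"
    using H by (simp_all add: k_def K_def)
  have T: "x / ln x - 1 < real T" "real T \<le> x / ln x"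
    using T_N_bounds[OF N] by (simp_all add: T_def x_def)
  have "x / ln x \<le> x / 1"
    using x by (intro divide_left_mono) (simp_all add: ln_gt_zero_imp_gt_one)
  with T(2) have Tx: "real T \<le> x"
    by simp
  have kT: "k \<le> T" "1 \<le> T"
    using k T assms(5) by (simp_all add: x_def)
  have "1 / (2 * ln x) \<le> r"
  proof -
    have "1 / ln x - 1 / x = (x / ln x - 1) / x"
      using x by (simp add: field_simps)
    also have "\<dots> \<le> r"
      unfolding r_def using T(1) x by (intro divide_right_mono) auto
    finally show ?thesis
      using assms(6) by (simp add: x_def)
  qed
  moreover have "r \<le> 1"
    using Tx x by (simp add: r_def)
  ultimately have gain: "x / (2 * exp 1) * (2 * K * ln x) powr (- K) \<le> x * r ^ k / (2 * fact k * exp r)"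
    using truncation_gain_ge[OF x _ k(1)] k by (simp add: K_def H)
  have heavy: "{y\<in>{1..N}. \<delta> * H_N N < real (eta \<omega> T y)} = {y\<in>{1..N}. k \<le> eta \<omega> T y}" for \<omega>
    using less_real_iff_Suc_nat_floor_le[OF H] by (auto simp: k_def)
  have "measure_pmf.prob (alloc_pmf N T) {\<omega>. real (card {y\<in>{1..N}. k \<le> eta \<omega> T y}) < m}
      \<le> 2 powr m * exp 1 * real T * exp (- (x * r ^ k / (2 * fact k * exp r)))"
    using prob_few_heavy_bins_le_exp[OF N kT(2,1), of m] by (simp add: r_def x_def)
  also have "\<dots> \<le> 1 / x ^ 2"
    using gain Tx x(1) assms(7)
    by (intro two_powr_mult_exp_le_inverse_square) (auto simp: m_def x_def)
  finally show ?thesis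
    unfolding prob_le_eq_one_minus_prob_less x_def[symmetric] m_def[symmetric] T_def[symmetric] heavy
    by simp
qed

lemma eventually_allocation_asymptotics:
  fixes \<alpha> \<delta> :: real
  assumes "0 < \<alpha>" "0 < \<delta>" "\<alpha> + 2 * \<delta> < 1"
  defines "K \<equiv> \<lambda>x. \<delta> * (ln x / ln (ln x)) + 1"
  shows "\<forall>\<^sub>F x in at_top. 0 < ln (ln x) \<and> 1 \<le> ln x \<and> K x \<le> x / ln x - 1 \<and>
    1 / (2 * ln x) \<le> 1 / ln x - 1 / x \<and>
    x powr \<alpha> * ln 2 + 1 + 3 * ln x \<le> x / (2 * exp 1) * (2 * K x * ln x) powr (- K x)"
proof -
  have "\<forall>\<^sub>F x in at_top. 0 < ln (ln (x::real))"
    by real_asymp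
  moreover have "\<forall>\<^sub>F x in at_top. 1 \<le> ln (x::real)"
    by real_asymp
  moreover have "\<forall>\<^sub>F x in at_top. K x \<le> x / ln x - 1"
    unfolding K_def using assms by real_asymp
  moreover have "\<forall>\<^sub>F x in at_top. 1 / (2 * ln x) \<le> 1 / ln x - 1 / (x::real)"
    by real_asymp
  moreover have "\<forall>\<^sub>F x in at_top.
      x powr \<alpha> * ln 2 + 1 + 3 * ln x \<le> x / (2 * exp 1) * (2 * K x * ln x) powr (- K x)"
    unfolding K_def using assms by real_asymp
  ultimately show ?thesis
    by eventually_elim blast
qed

lemma eventually_prob_many_heavy_bins:
  fixes \<alpha> \<delta> :: real
  assumes "0 < \<alpha>" "0 < \<delta>" "\<alpha> + 2 * \<delta> < 1"
  shows "\<forall>\<^sub>F N in sequentially. 1 - 1 / real N ^ 2 \<le> measure_pmf.prob (alloc_pmf N (T_N N))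
    {\<omega>. real N powr \<alpha> \<le> real (card {x\<in>{1..N}. \<delta> * H_N N < real (eta \<omega> (T_N N) x)})}"
  using eventually_compose_filterlim[OF eventually_allocation_asymptotics[OF assms]
      filterlim_real_sequentially]
proof eventually_elim
  case (elim N)
  then show ?case
    using assms(2) by (intro prob_many_heavy_bins_ge) (simp_all add: H_N_def)
qed

theorem lemma5p2:
  fixes \<alpha> \<delta> :: real
  assumes "1/2 \<le> \<alpha>" "\<alpha> < 1" "0 < \<delta>" "\<delta> < (1 - \<alpha>) / 2"
  shows "\<exists>\<epsilon> :: nat \<Rightarrow> real. (\<forall>N. 0 \<le> \<epsilon> N) \<and> summable \<epsilon> \<and>
    (\<forall>N. measure_pmf.prob (alloc_pmf N (T_N N))
        {\<omega>. real (card {x \<in> {1..N}. real (eta \<omega> (T_N N) x) > \<delta> * H_N N}) \<ge> real N powr \<alpha>}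
      \<ge> 1 - \<epsilon> N)"
proof -
  define P where "P N = measure_pmf.prob (alloc_pmf N (T_N N))
    {\<omega>. real N powr \<alpha> \<le> real (card {x \<in> {1..N}. \<delta> * H_N N < real (eta \<omega> (T_N N) x)})}" for N
  have "\<forall>\<^sub>F N in sequentially. norm (1 - P N) \<le> inverse (real N ^ 2)"
    using eventually_prob_many_heavy_bins[of \<alpha> \<delta>] assms
    by (auto simp: P_def inverse_eq_divide measure_pmf.prob_le_1 elim!: eventually_mono)
  then have "summable (\<lambda>N. 1 - P N)"
    by (rule summable_comparison_test_ev) (simp add: inverse_power_summable)
  moreover have "0 \<le> 1 - P N" for N
    by (simp add: P_def measure_pmf.prob_le_1)
  ultimately show ?thesis
    by (intro exI[of _ "\<lambda>N. 1 - P N"]) (simp add: P_def)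
qed

end
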